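(* Let $f,g\in G_{mn}$ satisfy $l(f)=l(g)>1$ and suppose $f$ and $g$ are not $H$-conjugate. Then there exists an integer $t>1$ such that $f\rho_t$ and $g\rho_t$ are not $H(t)$-conjugate in $G_{mn}(t)$.
   Context: Fix integers $m,n>1$ and let $G_{mn}=\langle a,b;\ [a^m,b^n]=1\rangle$. Put $c=a^m$, $d=b^n$, $H=\langle c,d\rangle$, $A=\langle a,H\rangle$, $B=\langle b,H\rangle$; then $G_{mn}=(A*B;\ H)$. For an integer $t>1$ let $G_{mn}(t)=\langle a,b;\ [a^m,b^n]=1,\ a^{mt}=b^{nt}=1\rangle$, $\rho_t:G_{mn}\to G_{mn}(t)$ the natural homomorphism, $H(t)=H\rho_t$. The length $l(g)$ is the number of components of a reduced form of $g$ in $(A*B;\ H)$ (a reduced form is $x_1\cdots x_r$ with each $x_i$ in $A$ or $B$ and, when $r>1$, consecutive components in different factors). For a subgroup $X$ of $Y$, $u,v\in Y$ are $X$-conjugate if $u=x^{-1}vx$ for some $x\in X$. *)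

theory Defs
  imports Main
begin

text \<open>Words over the generators a (False) and b (True); a letter is a generator
  together with an exponent sign (True = inverse).\<close>

type_synonym letter = "bool \<times> bool"
type_synonym word = "letter list"

definition flip :: "letter \<Rightarrow> letter" where
  "flip x = (fst x, \<not> snd x)"

definition winv :: "word \<Rightarrow> word" where
  "winv w = rev (map flip w)"

definition gen_a :: letter where "gen_a = (False, False)"
definition gen_b :: letter where "gen_b = (True, False)"

inductive eqp :: "word set \<Rightarrow> word \<Rightarrow> word \<Rightarrow> bool" for R :: "word set" where
  refl: "eqp R w w"
| sym: "eqp R w v \<Longrightarrow> eqp R v w"
| trans: "eqp R u v \<Longrightarrow> eqp R v w \<Longrightarrow> eqp R u w"
| cancel: "eqp R (u @ [x, flip x] @ v) (u @ v)"
| rel: "r \<in> R \<Longrightarrow> eqp R (u @ r @ v) (u @ v)"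

inductive_set gen_words :: "word set \<Rightarrow> word set" for S :: "word set" where
  nil: "[] \<in> gen_words S"
| gen: "s \<in> S \<Longrightarrow> w \<in> gen_words S \<Longrightarrow> s @ w \<in> gen_words S"
| geninv: "s \<in> S \<Longrightarrow> w \<in> gen_words S \<Longrightarrow> winv s @ w \<in> gen_words S"

definition in_sub :: "word set \<Rightarrow> word set \<Rightarrow> word \<Rightarrow> bool" where
  "in_sub R S w \<longleftrightarrow> (\<exists>u \<in> gen_words S. eqp R w u)"

definition c_word :: "nat \<Rightarrow> word" where "c_word m = replicate m gen_a"
definition d_word :: "nat \<Rightarrow> word" where "d_word n = replicate n gen_b"

definition commutator :: "word \<Rightarrow> word \<Rightarrow> word" where
  "commutator x y = winv x @ winv y @ x @ y"

definition rels_G :: "nat \<Rightarrow> nat \<Rightarrow> word set" where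
  "rels_G m n = {commutator (c_word m) (d_word n)}"

definition rels_Gt :: "nat \<Rightarrow> nat \<Rightarrow> nat \<Rightarrow> word set" where
  "rels_Gt m n t = {commutator (c_word m) (d_word n),
                    replicate (m * t) gen_a, replicate (n * t) gen_b}"

definition inH :: "nat \<Rightarrow> nat \<Rightarrow> word \<Rightarrow> bool" where
  "inH m n w = in_sub (rels_G m n) {c_word m, d_word n} w"
definition inA :: "nat \<Rightarrow> nat \<Rightarrow> word \<Rightarrow> bool" where
  "inA m n w = in_sub (rels_G m n) {[gen_a], c_word m, d_word n} w"
definition inB :: "nat \<Rightarrow> nat \<Rightarrow> word \<Rightarrow> bool" where
  "inB m n w = in_sub (rels_G m n) {[gen_b], c_word m, d_word n} w"

definition reduced_form :: "nat \<Rightarrow> nat \<Rightarrow> word \<Rightarrow> word list \<Rightarrow> bool" where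
  "reduced_form m n g xs \<longleftrightarrow>
     eqp (rels_G m n) (concat xs) g \<and>
     (\<forall>x \<in> set xs. inA m n x \<or> inB m n x) \<and>
     (length xs > 1 \<longrightarrow>
        (\<forall>i. Suc i < length xs \<longrightarrow>
           (inA m n (xs ! i) \<and> \<not> inH m n (xs ! i) \<and>
            inB m n (xs ! Suc i) \<and> \<not> inH m n (xs ! Suc i)) \<or>
           (inB m n (xs ! i) \<and> \<not> inH m n (xs ! i) \<and>
            inA m n (xs ! Suc i) \<and> \<not> inH m n (xs ! Suc i))))"

definition elength :: "nat \<Rightarrow> nat \<Rightarrow> word \<Rightarrow> nat" where
  "elength m n g = (LEAST r. \<exists>xs. length xs = r \<and> reduced_form m n g xs)"

definition sub_conj :: "word set \<Rightarrow> word set \<Rightarrow> word \<Rightarrow> word \<Rightarrow> bool" where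
  "sub_conj R S u v \<longleftrightarrow> (\<exists>x \<in> gen_words S. eqp R u (winv x @ v @ x))"

end

theory Submission
  imports Defs
begin

(*
  Words in a and b act on normal forms c^p d^q y_1 ... y_k, where each syllable y_i is a^r d^s
  (0 < r < m) or b^r c^s (0 < r < n), by left multiplication, with the exponents of c and d taken
  either in Z or modulo t. This action respects the relators of G_mn(t), and in G_mn every word
  equals the word of its normal form.

  An element c^i d^j of H acts by translating the head c^p d^q. Since l(g) > 1, the normal form of g
  contains syllables of both kinds, so conjugating it by c^i d^j moves its head by (-i, -j) while
  the carries into the syllables never reach the head. Hence an H(t)-conjugation of g into f
  determines the conjugator modulo t as the difference of the heads of g and f. If t is large
  compared with all exponents of c and d met while computing the normal forms of f and g,
  reduction modulo t commutes with these computations and is injective on the normal forms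
  involved, so c^(p_g - p_f) d^(q_g - q_f) conjugates g into f already in G_mn.
*)

section \<open>Words and integer powers\<close>

lemma flip_flip [simp]: "flip (flip x) = x"
  by (simp add: flip_def)

lemma winv_Nil [simp]: "winv [] = []"
  and winv_Cons [simp]: "winv (x # w) = winv w @ [flip x]"
  and winv_append [simp]: "winv (u @ v) = winv v @ winv u"
  and winv_winv [simp]: "winv (winv u) = u"
  by (simp_all add: winv_def rev_map comp_def)

lemma eqp_append_cong: "eqp R u v \<Longrightarrow> eqp R (p @ u @ s) (p @ v @ s)"
proof (induction rule: eqp.induct)
  case (cancel u x v)
  show ?case using eqp.cancel[of R "p @ u" x "v @ s"] by simp
next
  case (rel r u v)
  show ?case using eqp.rel[OF rel, of "p @ u" "v @ s"] by simp
qed (auto intro: eqp.intros)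

lemma eqp_append_left: "eqp R u v \<Longrightarrow> eqp R (p @ u) (p @ v)"
  using eqp_append_cong[of R u v p "[]"] by simp

lemma eqp_append_right: "eqp R u v \<Longrightarrow> eqp R (u @ s) (v @ s)"
  using eqp_append_cong[of R u v "[]" s] by simp

lemmas [trans] = eqp.trans

lemma eqp_winv_cancel: "eqp R (winv w @ w @ v) v"
proof (induction w arbitrary: v)
  case (Cons x w)
  have "eqp R (winv w @ [flip x, x] @ w @ v) (winv w @ w @ v)"
    using eqp.cancel[of R "winv w" "flip x" "w @ v"] by simp
  then show ?case using Cons by (simp add: eqp.trans)
qed (simp add: eqp.refl)

lemma eqp_cancel_winv: "eqp R (w @ winv w @ v) v"
  using eqp_winv_cancel[of R "winv w" v] by simp

definition wpow :: "word \<Rightarrow> int \<Rightarrow> word" where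
  "wpow w k = (if 0 \<le> k then concat (replicate (nat k) w) else concat (replicate (nat (- k)) (winv w)))"

lemma wpow_0 [simp]: "wpow w 0 = []"
  by (simp add: wpow_def)

lemma wpow_1: "wpow w 1 = w"
  and wpow_minus_1: "wpow w (-1) = winv w"
  by (simp_all add: wpow_def)

lemma eqp_wpow_succ: "eqp R (wpow w (k + 1)) (w @ wpow w k)"
proof (cases "0 \<le> k")
  case True
  then show ?thesis by (simp add: wpow_def nat_add_distrib eqp.refl)
next
  case False
  then have "nat (- k) = Suc (nat (- (k + 1)))" by simp
  with False have "wpow w k = winv w @ wpow w (k + 1)"
    by (auto simp: wpow_def)
  then show ?thesis using eqp_cancel_winv[of R w "wpow w (k + 1)"] by (simp add: eqp.sym)
qed

lemma eqp_wpow_pred: "eqp R (wpow w (k - 1)) (winv w @ wpow w k)"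
proof -
  have "eqp R (winv w @ w @ wpow w (k - 1)) (winv w @ wpow w k)"
    using eqp_append_left[OF eqp.sym[OF eqp_wpow_succ[of R w "k - 1"]]] by simp
  then show ?thesis using eqp_winv_cancel eqp.sym eqp.trans by metis
qed

lemma eqp_wpow_add: "eqp R (wpow w k @ wpow w l @ v) (wpow w (k + l) @ v)"
proof (induction k rule: int_induct[where k = 0])
  case base
  show ?case by (simp add: eqp.refl)
next
  case (step1 i)
  have "eqp R (wpow w (i + 1) @ wpow w l @ v) (w @ wpow w i @ wpow w l @ v)"
    using eqp_append_right[OF eqp_wpow_succ[of R w i]] by simp
  also have "eqp R \<dots> (w @ wpow w (i + l) @ v)"
    using eqp_append_left[OF step1(2)] .
  also have "eqp R \<dots> (wpow w (i + l + 1) @ v)"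
    using eqp_append_right[OF eqp.sym[OF eqp_wpow_succ]] by simp
  finally show ?case by (simp add: ac_simps)
next
  case (step2 i)
  have "eqp R (wpow w (i - 1) @ wpow w l @ v) (winv w @ wpow w i @ wpow w l @ v)"
    using eqp_append_right[OF eqp_wpow_pred[of R w i]] by simp
  also have "eqp R \<dots> (winv w @ wpow w (i + l) @ v)"
    using eqp_append_left[OF step2(2)] .
  also have "eqp R \<dots> (wpow w (i + l - 1) @ v)"
    using eqp_append_right[OF eqp.sym[OF eqp_wpow_pred]] by simp
  finally show ?case by (simp add: algebra_simps)
qed

lemma eqp_commute_winv:
  assumes "eqp R (u @ v) (v @ u)"
  shows "eqp R (winv u @ v) (v @ winv u)"
proof -
  have "eqp R (winv u @ v) (winv u @ v @ u @ winv u)"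
    using eqp_append_left[OF eqp.sym[OF eqp_cancel_winv[of R u "[]"]], of "winv u @ v"] by simp
  also have "eqp R \<dots> (winv u @ u @ v @ winv u)"
    using eqp_append_cong[OF eqp.sym[OF assms], of "winv u" "winv u"] by simp
  also have "eqp R \<dots> (v @ winv u)"
    by (rule eqp_winv_cancel)
  finally show ?thesis .
qed

lemma eqp_commute_wpow_left:
  assumes uv: "eqp R (u @ v) (v @ u)"
  shows "eqp R (wpow u k @ v) (v @ wpow u k)"
proof (induction k rule: int_induct[where k = 0])
  case base
  show ?case by (simp add: eqp.refl)
next
  case (step1 i)
  have "eqp R (wpow u (i + 1) @ v) (u @ wpow u i @ v)"
    using eqp_append_right[OF eqp_wpow_succ[of R u i]] by simp
  also have "eqp R \<dots> (u @ v @ wpow u i)"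
    using eqp_append_left[OF step1(2)] .
  also have "eqp R \<dots> (v @ u @ wpow u i)"
    using eqp_append_right[OF uv, of "wpow u i"] by simp
  also have "eqp R \<dots> (v @ wpow u (i + 1))"
    using eqp_append_left[OF eqp.sym[OF eqp_wpow_succ[of R u i]]] .
  finally show ?case .
next
  case (step2 i)
  have "eqp R (wpow u (i - 1) @ v) (winv u @ wpow u i @ v)"
    using eqp_append_right[OF eqp_wpow_pred[of R u i]] by simp
  also have "eqp R \<dots> (winv u @ v @ wpow u i)"
    using eqp_append_left[OF step2(2)] .
  also have "eqp R \<dots> (v @ winv u @ wpow u i)"
    using eqp_append_right[OF eqp_commute_winv[OF uv], of "wpow u i"] by simp
  also have "eqp R \<dots> (v @ wpow u (i - 1))"
    using eqp_append_left[OF eqp.sym[OF eqp_wpow_pred[of R u i]]] .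
  finally show ?case .
qed

lemma eqp_commute_wpow:
  assumes "eqp R (u @ v) (v @ u)"
  shows "eqp R (wpow u k @ wpow v l @ w) (wpow v l @ wpow u k @ w)"
proof -
  have "eqp R (wpow v l @ u) (u @ wpow v l)"
    using eqp_commute_wpow_left[OF eqp.sym[OF assms]] .
  then have "eqp R (wpow u k @ wpow v l) (wpow v l @ wpow u k)"
    using eqp_commute_wpow_left[OF eqp.sym] by blast
  then show ?thesis using eqp_append_right by fastforce
qed

lemma concat_replicate_replicate: "concat (replicate i (replicate j x)) = replicate (i * j) x"
  by (induction i) (simp_all add: replicate_add)

lemma wpow_replicate: "wpow [x] (int j * k) = wpow (replicate j x) k"
proof -
  have "nat (int j * k) = nat k * j" "nat (- (int j * k)) = nat (- k) * j"
    using nat_mult_distrib[of "int j" k] nat_mult_distrib[of "int j" "- k"] by simp_all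
  then show ?thesis
    by (cases "j = 0") (auto simp: wpow_def winv_def concat_replicate_replicate zero_le_mult_iff)
qed

lemma gen_words_append: "u \<in> gen_words S \<Longrightarrow> v \<in> gen_words S \<Longrightarrow> u @ v \<in> gen_words S"
  by (induction rule: gen_words.induct) (auto intro: gen_words.intros)

lemma gen_words_wpow: "s \<in> S \<Longrightarrow> wpow s k \<in> gen_words S"
proof -
  assume "s \<in> S"
  then have "concat (replicate j s) \<in> gen_words S" "concat (replicate j (winv s)) \<in> gen_words S" for j
    by (induction j) (auto intro: gen_words.intros)
  then show ?thesis by (simp add: wpow_def)
qed

section \<open>Normal forms\<close>

definition red :: "nat \<Rightarrow> int \<Rightarrow> int" where
  "red T x = x mod int T"

lemma red_0 [simp]: "red T 0 = 0"
  and red_modulus_0 [simp]: "red 0 x = x"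
  and red_red [simp]: "red T (red T x) = red T x"
  and red_add_red_left [simp]: "red T (red T x + y) = red T (x + y)"
  and red_add_red_right [simp]: "red T (x + red T y) = red T (x + y)"
  and red_diff_red_left [simp]: "red T (red T x - y) = red T (x - y)"
  and red_diff_red_right [simp]: "red T (x - red T y) = red T (x - y)"
  by (simp_all add: red_def mod_simps)

lemma red_eq_0_iff: "\<bar>x\<bar> < int T \<Longrightarrow> red T x = 0 \<longleftrightarrow> x = 0"
proof
  assume "\<bar>x\<bar> < int T" "red T x = 0"
  then show "x = 0" using dvd_imp_le_int[of x "int T"] by (fastforce simp: red_def dvd_eq_mod_eq_0)
qed simp

lemma red_inj_bounded:
  assumes "red T x = red T y" "\<bar>x\<bar> \<le> K" "\<bar>y\<bar> \<le> K" "2 * K < int T"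
  shows "x = y"
proof -
  have "int T dvd x - y" using assms(1) by (simp add: red_def mod_eq_dvd_iff)
  moreover have "\<bar>x - y\<bar> < int T" using assms by linarith
  ultimately show ?thesis using dvd_imp_le_int[of "x - y" "int T"] by fastforce
qed

lemma mod_pos_if_nonzero: "0 < k \<Longrightarrow> x mod k \<noteq> 0 \<Longrightarrow> 0 < (x :: int) mod k"
  using pos_mod_sign[of k x] by linarith

lemma div_mod_add_mod_right:
  fixes k :: int
  assumes "0 < k"
  shows "(x + y) div k = (x + y mod k) div k + y div k" "(x + y) mod k = (x + y mod k) mod k"
proof -
  have "x + y = (x + y mod k) + k * (y div k)" by simp
  then have "(x + y) div k = ((x + y mod k) + k * (y div k)) div k" by (rule arg_cong)
  also have "\<dots> = (x + y mod k) div k + y div k"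
    using assms div_mult_self2[of k "x + y mod k" "y div k"] by linarith
  finally show "(x + y) div k = (x + y mod k) div k + y div k" .
qed (simp add: mod_add_right_eq)

type_synonym syllable = "bool \<times> int \<times> int"

type_synonym nform = "(int \<times> int) \<times> syllable list"

text \<open>The normal form \<open>((p, q), ys)\<close> stands for \<open>c\<^sup>p d\<^sup>q y\<^sub>1 \<cdots> y\<^sub>k\<close>, where a syllable
  \<open>(False, r, s)\<close> stands for \<open>a\<^sup>r d\<^sup>s\<close> with \<open>0 < r < m\<close> and \<open>(True, r, s)\<close> for \<open>b\<^sup>r c\<^sup>s\<close>
  with \<open>0 < r < n\<close>. All exponents of \<open>c\<close> and \<open>d\<close> are reduced modulo \<open>T\<close>: \<open>T = 0\<close> (no
  reduction) models \<open>G\<^sub>m\<^sub>n\<close>, and \<open>T = t\<close> models \<open>G\<^sub>m\<^sub>n(t)\<close>.\<close>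

fun valid_syls :: "nat \<Rightarrow> nat \<Rightarrow> nat \<Rightarrow> syllable list \<Rightarrow> bool" where
  "valid_syls T m n [] = True"
| "valid_syls T m n ((t, r, s) # ys) \<longleftrightarrow>
     red T s = s \<and> 0 < r \<and> r < (if t then int n else int m) \<and>
     (case ys of [] \<Rightarrow> True | (t', _) # _ \<Rightarrow> t' = t \<longrightarrow> s \<noteq> 0) \<and>
     valid_syls T m n ys"

fun valid_nf :: "nat \<Rightarrow> nat \<Rightarrow> nat \<Rightarrow> nform \<Rightarrow> bool" where
  "valid_nf T m n ((p, q), ys) \<longleftrightarrow> red T p = p \<and> red T q = q \<and> valid_syls T m n ys"

lemma nform_cases [case_names Nil Cons]:
  obtains p q where "nf = ((p, q), [])"
  | p q t r s ys where "nf = ((p, q), (t, r, s) # ys)"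
  by (metis list.exhaust prod.exhaust)

text \<open>\<open>mul_a\<close> computes the normal form of \<open>a\<^sup>e \<cdot> nf\<close>: \<open>a\<^sup>e = c\<^bsup>e div m\<^esup> a\<^bsup>e mod m\<^esup>\<close>, the
  power of \<open>c\<close> moves into the head because \<open>c\<close> commutes with \<open>a\<close> and \<open>d\<close>, and the remaining
  power of \<open>a\<close> merges into a leading \<open>a\<close>-syllable when no power of \<open>d\<close> separates them.
  \<open>mul_b\<close> is symmetric.\<close>

fun mul_a :: "nat \<Rightarrow> nat \<Rightarrow> int \<Rightarrow> nform \<Rightarrow> nform" where
  "mul_a T m e ((p, q), []) =
     (if e mod int m = 0 then ((red T (p + e div int m), q), [])
      else ((red T (p + e div int m), 0), [(False, e mod int m, q)]))"
| "mul_a T m e ((p, q), (t, r, s) # ys) =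
     (if q \<noteq> 0 \<or> t then
        (if e mod int m = 0 then ((red T (p + e div int m), q), (t, r, s) # ys)
         else ((red T (p + e div int m), 0), (False, e mod int m, q) # (t, r, s) # ys))
      else
        (if (e + r) mod int m = 0 then ((red T (p + (e + r) div int m), s), ys)
         else ((red T (p + (e + r) div int m), 0), (False, (e + r) mod int m, s) # ys)))"

fun mul_b :: "nat \<Rightarrow> nat \<Rightarrow> int \<Rightarrow> nform \<Rightarrow> nform" where
  "mul_b T n e ((p, q), []) =
     (if e mod int n = 0 then ((p, red T (q + e div int n)), [])
      else ((0, red T (q + e div int n)), [(True, e mod int n, p)]))"
| "mul_b T n e ((p, q), (t, r, s) # ys) =
     (if p \<noteq> 0 \<or> \<not> t then
        (if e mod int n = 0 then ((p, red T (q + e div int n)), (t, r, s) # ys)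
         else ((0, red T (q + e div int n)), (True, e mod int n, p) # (t, r, s) # ys))
      else
        (if (e + r) mod int n = 0 then ((s, red T (q + (e + r) div int n)), ys)
         else ((0, red T (q + (e + r) div int n)), (True, (e + r) mod int n, s) # ys)))"

fun mul_cd :: "nat \<Rightarrow> int \<times> int \<Rightarrow> nform \<Rightarrow> nform" where
  "mul_cd T (i, j) ((p, q), ys) = ((red T (p + i), red T (q + j)), ys)"

definition act_letter :: "nat \<Rightarrow> nat \<Rightarrow> nat \<Rightarrow> letter \<Rightarrow> nform \<Rightarrow> nform" where
  "act_letter T m n x =
     (let e = if snd x then -1 else 1 in if fst x then mul_b T n e else mul_a T m e)"

definition act :: "nat \<Rightarrow> nat \<Rightarrow> nat \<Rightarrow> word \<Rightarrow> nform \<Rightarrow> nform" where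
  "act T m n w nf = foldr (act_letter T m n) w nf"

lemma act_Nil [simp]: "act T m n [] nf = nf"
  and act_Cons [simp]: "act T m n (x # w) nf = act_letter T m n x (act T m n w nf)"
  and act_append [simp]: "act T m n (u @ v) nf = act T m n u (act T m n v nf)"
  by (simp_all add: act_def)

lemma valid_mul_cd: "valid_nf T m n nf \<Longrightarrow> valid_nf T m n (mul_cd T v nf)"
  by (cases nf rule: nform_cases; cases v) auto

lemma mul_cd_mul_cd: "mul_cd T v (mul_cd T w nf) = mul_cd T (fst v + fst w, snd v + snd w) nf"
  by (cases nf rule: nform_cases; cases v; cases w) (simp_all add: ac_simps)

lemma mul_cd_0: "valid_nf T m n nf \<Longrightarrow> mul_cd T (0, 0) nf = nf"
  by (cases nf rule: nform_cases) auto

lemma mul_cd_cong: "red T i = red T i' \<Longrightarrow> red T j = red T j' \<Longrightarrow> mul_cd T (i, j) nf = mul_cd T (i', j') nf"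
  by (cases nf rule: nform_cases) (metis mul_cd.simps red_add_red_right)+

text \<open>Right multiplication by \<open>c\<^sup>i d\<^sup>j\<close>, moved leftwards through the syllables: an \<open>a\<close>-syllable
  commutes with \<open>c\<close> and absorbs the power of \<open>d\<close>, a \<open>b\<close>-syllable commutes with \<open>d\<close> and absorbs
  the power of \<open>c\<close>. The second component is the part that reaches the head \<open>c\<^sup>p d\<^sup>q\<close>.\<close>

fun rmul_syls :: "nat \<Rightarrow> syllable list \<Rightarrow> int \<times> int \<Rightarrow> syllable list \<times> (int \<times> int)" where
  "rmul_syls T [] v = ([], v)"
| "rmul_syls T ((t, r, s) # ys) v = (case rmul_syls T ys v of (ys', (i, j)) \<Rightarrow>
     if t then ((t, r, red T (s + i)) # ys', (0, j)) else ((t, r, red T (s + j)) # ys', (i, 0)))"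

fun rmul_cd :: "nat \<Rightarrow> nform \<Rightarrow> int \<times> int \<Rightarrow> nform" where
  "rmul_cd T ((p, q), ys) v =
     (case rmul_syls T ys v of (ys', (i, j)) \<Rightarrow> ((red T (p + i), red T (q + j)), ys'))"

lemma rmul_syls_cases: obtains ys' i j where "rmul_syls T ys v = (ys', (i, j))"
  by (metis prod.exhaust)

lemma rmul_syls_types: "map fst (fst (rmul_syls T ys v)) = map fst ys"
  by (induction ys) (auto split: prod.splits)

lemma rmul_syls_carry:
  "(\<exists>y\<in>set ys. fst y) \<Longrightarrow> fst (snd (rmul_syls T ys v)) = 0"
  "(\<exists>y\<in>set ys. \<not> fst y) \<Longrightarrow> snd (snd (rmul_syls T ys v)) = 0"
  by (induction ys) (fastforce split: prod.splits)+

lemma valid_rmul_syls: "valid_syls T m n ys \<Longrightarrow> valid_syls T m n (fst (rmul_syls T ys v))"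
proof (induction ys)
  case (Cons y ys)
  obtain t r s where y: "y = (t, r, s)" by (cases y)
  obtain ys' i j where R: "rmul_syls T ys v = (ys', (i, j))" by (rule rmul_syls_cases)
  have "map fst ys' = map fst ys" using rmul_syls_types[of T ys v] R by simp
  then show ?case
    using Cons R rmul_syls_carry[of ys T v] unfolding y by (cases ys; cases ys'; auto)
qed simp

lemma valid_rmul_cd: "valid_nf T m n nf \<Longrightarrow> valid_nf T m n (rmul_cd T nf v)"
proof (cases nf rule: nform_cases)
  case (Cons p q t r s ys)
  obtain ys' i j where "rmul_syls T ((t, r, s) # ys) v = (ys', (i, j))" by (rule rmul_syls_cases)
  then show "valid_nf T m n nf \<Longrightarrow> ?thesis"
    using Cons valid_rmul_syls[of T m n "(t, r, s) # ys" v] by simp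
qed (cases v; simp)

definition conj_cd :: "nat \<Rightarrow> nform \<Rightarrow> int \<times> int \<Rightarrow> nform" where
  "conj_cd T nf v = mul_cd T (- fst v, - snd v) (rmul_cd T nf v)"

definition mixed_syls :: "syllable list \<Rightarrow> bool" where
  "mixed_syls ys \<longleftrightarrow> (\<exists>y\<in>set ys. fst y) \<and> (\<exists>y\<in>set ys. \<not> fst y)"

lemma conj_cd_mixed:
  "mixed_syls ys \<Longrightarrow>
    conj_cd T ((p, q), ys) (i, j) = ((red T (p - i), red T (q - j)), fst (rmul_syls T ys (i, j)))"
  using rmul_syls_carry[of ys T "(i, j)"]
  by (auto simp: conj_cd_def mixed_syls_def split: prod.splits)

section \<open>Reduction modulo \<open>T\<close>\<close>

definition red_syls :: "nat \<Rightarrow> syllable list \<Rightarrow> syllable list" where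
  "red_syls T = map (\<lambda>(t, r, s). (t, r, red T s))"

fun red_nf :: "nat \<Rightarrow> nform \<Rightarrow> nform" where
  "red_nf T ((p, q), ys) = ((red T p, red T q), red_syls T ys)"

lemma red_syls_Nil [simp]: "red_syls T [] = []"
  and red_syls_Cons [simp]: "red_syls T ((t, r, s) # ys) = (t, r, red T s) # red_syls T ys"
  by (simp_all add: red_syls_def)

fun head_bound :: "nform \<Rightarrow> int" where
  "head_bound ((p, q), ys) = max \<bar>p\<bar> \<bar>q\<bar>"

fun syls_bound :: "syllable list \<Rightarrow> int" where
  "syls_bound [] = 0"
| "syls_bound ((t, r, s) # ys) = max \<bar>s\<bar> (syls_bound ys)"

fun nf_bound :: "nform \<Rightarrow> int" where
  "nf_bound ((p, q), ys) = max (max \<bar>p\<bar> \<bar>q\<bar>) (syls_bound ys)"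

lemma syls_bound_nonneg: "0 \<le> syls_bound ys"
  by (induction ys rule: syls_bound.induct) auto

lemma rmul_syls_red_syls:
  "rmul_syls T (red_syls T ys) v = (red_syls T (fst (rmul_syls 0 ys v)), snd (rmul_syls 0 ys v))"
  by (induction ys) (auto split: prod.splits)

lemma rmul_cd_red_nf: "rmul_cd T (red_nf T nf) v = red_nf T (rmul_cd 0 nf v)"
  by (cases nf rule: nform_cases; cases v) (auto simp: rmul_syls_red_syls split: prod.splits)

lemma rmul_syls_cong:
  assumes "red T i = red T i'" "red T j = red T j'"
  shows "fst (rmul_syls T ys (i, j)) = fst (rmul_syls T ys (i', j')) \<and>
    red T (fst (snd (rmul_syls T ys (i, j)))) = red T (fst (snd (rmul_syls T ys (i', j')))) \<and>
    red T (snd (snd (rmul_syls T ys (i, j)))) = red T (snd (snd (rmul_syls T ys (i', j'))))"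
proof (induction ys)
  case (Cons y ys)
  obtain t r s where y: "y = (t, r, s)" by (cases y)
  obtain ys1 i1 j1 where R1: "rmul_syls T ys (i, j) = (ys1, (i1, j1))" by (rule rmul_syls_cases)
  obtain ys2 i2 j2 where R2: "rmul_syls T ys (i', j') = (ys2, (i2, j2))" by (rule rmul_syls_cases)
  have "red T (s + i1) = red T (s + i2)" "red T (s + j1) = red T (s + j2)"
    using Cons R1 R2 by (metis fst_conv snd_conv red_add_red_right)+
  then show ?case using Cons R1 R2 unfolding y by auto
qed (use assms in simp)

lemma rmul_cd_cong:
  assumes "red T i = red T i'" "red T j = red T j'"
  shows "rmul_cd T nf (i, j) = rmul_cd T nf (i', j')"
proof -
  obtain p q ys where nf: "nf = ((p, q), ys)" by (metis prod.exhaust)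
  obtain ys1 i1 j1 where R1: "rmul_syls T ys (i, j) = (ys1, (i1, j1))" by (rule rmul_syls_cases)
  obtain ys2 i2 j2 where R2: "rmul_syls T ys (i', j') = (ys2, (i2, j2))" by (rule rmul_syls_cases)
  have "red T (p + i1) = red T (p + i2)" "red T (q + j1) = red T (q + j2)"
    using rmul_syls_cong[OF assms, of ys] R1 R2 by (metis fst_conv snd_conv red_add_red_right)+
  then show ?thesis using rmul_syls_cong[OF assms, of ys] R1 R2 unfolding nf by simp
qed

lemma conj_cd_red_nf: "conj_cd T (red_nf T nf) v = red_nf T (conj_cd 0 nf v)"
proof -
  have "mul_cd T v (red_nf T nf) = red_nf T (mul_cd 0 v nf)" for v nf
    by (cases nf rule: nform_cases; cases v) auto
  then show ?thesis by (simp add: conj_cd_def rmul_cd_red_nf)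
qed

lemma conj_cd_cong:
  "red T i = red T i' \<Longrightarrow> red T j = red T j' \<Longrightarrow> conj_cd T nf (i, j) = conj_cd T nf (i', j')"
proof -
  assume "red T i = red T i'" "red T j = red T j'"
  moreover from this have "red T (- i) = red T (- i')" "red T (- j) = red T (- j')"
    by (metis diff_0 red_diff_red_right)+
  ultimately show ?thesis unfolding conj_cd_def by (metis fst_conv snd_conv rmul_cd_cong mul_cd_cong)
qed

lemma rmul_syls_bound:
  "\<bar>i\<bar> \<le> L \<Longrightarrow> \<bar>j\<bar> \<le> L \<Longrightarrow>
    syls_bound (fst (rmul_syls 0 ys (i, j))) \<le> syls_bound ys + L \<and>
    \<bar>fst (snd (rmul_syls 0 ys (i, j)))\<bar> \<le> L \<and> \<bar>snd (snd (rmul_syls 0 ys (i, j)))\<bar> \<le> L"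
proof (induction ys)
  case (Cons y ys)
  obtain t r s where y: "y = (t, r, s)" by (cases y)
  obtain ys' i' j' where R: "rmul_syls 0 ys (i, j) = (ys', (i', j'))" by (rule rmul_syls_cases)
  show ?case using Cons R syls_bound_nonneg[of ys] unfolding y by (auto simp: abs_le_iff max_def)
qed simp

lemma red_syls_inj_bounded:
  "red_syls T ys = red_syls T zs \<Longrightarrow> syls_bound ys \<le> K \<Longrightarrow> syls_bound zs \<le> K \<Longrightarrow> 2 * K < int T \<Longrightarrow>
    ys = zs"
proof (induction ys arbitrary: zs)
  case Nil
  then show ?case by (simp add: red_syls_def)
next
  case (Cons y ys)
  obtain t r s where y: "y = (t, r, s)" by (cases y)
  obtain t' r' s' zs' where zs: "zs = (t', r', s') # zs'"
    using Cons.prems(1) by (cases zs) (auto simp: y red_syls_def)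
  have "s = s'" using Cons.prems red_inj_bounded[of T s s' K] unfolding y zs by auto
  moreover have "ys = zs'" using Cons unfolding y zs by auto
  ultimately show ?case using Cons.prems unfolding y zs by auto
qed

lemma red_nf_inj_bounded:
  "red_nf T X = red_nf T Y \<Longrightarrow> nf_bound X \<le> K \<Longrightarrow> nf_bound Y \<le> K \<Longrightarrow> 2 * K < int T \<Longrightarrow> X = Y"
  by (cases X rule: nform_cases; cases Y rule: nform_cases)
    (auto dest: red_inj_bounded red_syls_inj_bounded)

lemma conj_cd_lift:
  assumes mixed: "mixed_syls ysG"
    and bound_F: "nf_bound ((pF, qF), ysF) \<le> B" and bound_G: "nf_bound ((pG, qG), ysG) \<le> B"
    and T: "6 * B < int T"
    and conj: "red_nf T ((pF, qF), ysF) = conj_cd T (red_nf T ((pG, qG), ysG)) (i, j)"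
  shows "((pF, qF), ysF) = conj_cd 0 ((pG, qG), ysG) (pG - pF, qG - qF)"
proof -
  let ?W = "conj_cd 0 ((pG, qG), ysG) (pG - pF, qG - qF)"
  have "mixed_syls (red_syls T ysG)"
    using mixed by (force simp: mixed_syls_def red_syls_def)
  then have head: "red T pF = red T (pG - i)" "red T qF = red T (qG - j)"
    using conj conj_cd_mixed[of "red_syls T ysG" T "red T pG" "red T qG" i j] by simp_all
  have "red T (pG - pF) = red T (pG - red T (pG - i))"
    by (simp flip: head(1))
  moreover have "red T (qG - qF) = red T (qG - red T (qG - j))"
    by (simp flip: head(2))
  ultimately have "red T i = red T (pG - pF)" "red T j = red T (qG - qF)"
    by simp_all
  then have "conj_cd T (red_nf T ((pG, qG), ysG)) (i, j) =
      conj_cd T (red_nf T ((pG, qG), ysG)) (pG - pF, qG - qF)"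
    by (rule conj_cd_cong)
  then have "red_nf T ((pF, qF), ysF) = red_nf T ?W"
    using conj conj_cd_red_nf by metis
  moreover have "nf_bound ((pF, qF), ysF) \<le> 3 * B" using bound_F by auto
  moreover have "nf_bound ?W \<le> 3 * B"
  proof -
    have "\<bar>pG - pF\<bar> \<le> 2 * B" "\<bar>qG - qF\<bar> \<le> 2 * B" "\<bar>pF\<bar> \<le> B" "\<bar>qF\<bar> \<le> B" "syls_bound ysG \<le> B"
      using bound_F bound_G by auto
    then show ?thesis
      using conj_cd_mixed[OF mixed, of 0 pG qG "pG - pF" "qG - qF"]
        rmul_syls_bound[of "pG - pF" "2 * B" "qG - qF" ysG]
      by (simp; intro conjI; linarith)
  qed
  moreover have "2 * (3 * B) < int T" using T by simp
  ultimately show ?thesis by (rule red_nf_inj_bounded)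
qed

section \<open>The action of \<open>G\<^sub>m\<^sub>n(T)\<close> on normal forms\<close>

locale Gmn =
  fixes m n :: nat
  assumes m_pos: "0 < m" and n_pos: "0 < n"
begin

lemma valid_mul_a: "valid_nf T m n nf \<Longrightarrow> valid_nf T m n (mul_a T m e nf)"
  using m_pos
  by (cases nf rule: nform_cases) (auto simp: red_def mod_pos_if_nonzero split: list.splits)

lemma valid_mul_b: "valid_nf T m n nf \<Longrightarrow> valid_nf T m n (mul_b T n e nf)"
  using n_pos
  by (cases nf rule: nform_cases) (auto simp: red_def mod_pos_if_nonzero split: list.splits)

lemma mul_a_add: "valid_nf T m n nf \<Longrightarrow> mul_a T m e (mul_a T m e' nf) = mul_a T m (e + e') nf"
proof (cases nf rule: nform_cases)
  case (Nil p q)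
  then show ?thesis
    using m_pos div_mod_add_mod_right[of "int m" e e']
    by (auto simp: ac_simps mod_pos_if_nonzero)
next
  case (Cons p q t r s ys)
  assume "valid_nf T m n nf"
  then show ?thesis
    using Cons m_pos div_mod_add_mod_right[of "int m" e e'] div_mod_add_mod_right[of "int m" e "e' + r"]
    by (auto simp: ac_simps mod_pos_if_nonzero split: list.splits)
qed

lemma mul_b_add: "valid_nf T m n nf \<Longrightarrow> mul_b T n e (mul_b T n e' nf) = mul_b T n (e + e') nf"
proof (cases nf rule: nform_cases)
  case (Nil p q)
  then show ?thesis
    using n_pos div_mod_add_mod_right[of "int n" e e']
    by (auto simp: ac_simps mod_pos_if_nonzero)
next
  case (Cons p q t r s ys)
  assume "valid_nf T m n nf"
  then show ?thesis
    using Cons n_pos div_mod_add_mod_right[of "int n" e e'] div_mod_add_mod_right[of "int n" e "e' + r"]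
    by (cases t; cases "p = 0"; auto simp: ac_simps mod_pos_if_nonzero split: list.splits)
qed

lemma mul_a_multiple: "valid_nf T m n nf \<Longrightarrow> mul_a T m (int m * k) nf = mul_cd T (k, 0) nf"
proof (cases nf rule: nform_cases)
  case (Cons p q t r s ys)
  assume "valid_nf T m n nf"
  moreover have "(int m * k + r) div int m = k" "(int m * k + r) mod int m = r" "\<not> int m dvd r"
    if "0 < r" "r < int m"
    using that m_pos zdvd_not_zless by (simp_all add: add.commute)
  ultimately show ?thesis using Cons m_pos by (cases t) (auto simp: red_def)
qed (use m_pos in \<open>auto simp: red_def\<close>)

lemma mul_b_multiple: "valid_nf T m n nf \<Longrightarrow> mul_b T n (int n * k) nf = mul_cd T (0, k) nf"
proof (cases nf rule: nform_cases)
  case (Cons p q t r s ys)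
  assume "valid_nf T m n nf"
  moreover have "(int n * k + r) div int n = k" "(int n * k + r) mod int n = r" "\<not> int n dvd r"
    if "0 < r" "r < int n"
    using that n_pos zdvd_not_zless by (simp_all add: add.commute)
  ultimately show ?thesis using Cons n_pos by (cases t) (auto simp: red_def)
qed (use n_pos in \<open>auto simp: red_def\<close>)

lemma mul_a_0: "valid_nf T m n nf \<Longrightarrow> mul_a T m 0 nf = nf"
  using mul_a_multiple[of T nf 0] mul_cd_0 by simp

lemma mul_b_0: "valid_nf T m n nf \<Longrightarrow> mul_b T n 0 nf = nf"
  using mul_b_multiple[of T nf 0] mul_cd_0 by simp

lemma valid_act: "valid_nf T m n nf \<Longrightarrow> valid_nf T m n (act T m n w nf)"
  by (induction w) (simp_all add: act_letter_def valid_mul_a valid_mul_b)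

lemma act_winv: "valid_nf T m n nf \<Longrightarrow> act T m n (winv w) (act T m n w nf) = nf"
proof (induction w arbitrary: nf)
  case (Cons x w)
  have "act_letter T m n (flip x) (act_letter T m n x nf') = nf'" if "valid_nf T m n nf'" for nf'
    using that by (cases x) (auto simp: act_letter_def flip_def mul_a_add mul_b_add mul_a_0 mul_b_0)
  with Cons valid_act show ?case by simp
qed simp

lemma act_wpow_a: "valid_nf T m n nf \<Longrightarrow> act T m n (wpow [gen_a] e) nf = mul_a T m e nf"
proof -
  assume valid: "valid_nf T m n nf"
  have "act T m n (replicate k x) nf = mul_a T m (int k * (if snd x then -1 else 1)) nf"
    if "\<not> fst x" for k x
    using that valid
    by (induction k) (auto simp: act_letter_def mul_a_0 mul_a_add valid_act algebra_simps)
  then show ?thesis by (auto simp: wpow_def gen_a_def winv_def flip_def)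
qed

lemma act_wpow_b: "valid_nf T m n nf \<Longrightarrow> act T m n (wpow [gen_b] e) nf = mul_b T n e nf"
proof -
  assume valid: "valid_nf T m n nf"
  have "act T m n (replicate k x) nf = mul_b T n (int k * (if snd x then -1 else 1)) nf"
    if "fst x" for k x
    using that valid
    by (induction k) (auto simp: act_letter_def mul_b_0 mul_b_add valid_act algebra_simps)
  then show ?thesis by (auto simp: wpow_def gen_b_def winv_def flip_def)
qed

lemma act_wpow_c: "valid_nf T m n nf \<Longrightarrow> act T m n (wpow (c_word m) k) nf = mul_cd T (k, 0) nf"
  using act_wpow_a mul_a_multiple wpow_replicate by (metis c_word_def)

lemma act_wpow_d: "valid_nf T m n nf \<Longrightarrow> act T m n (wpow (d_word n) k) nf = mul_cd T (0, k) nf"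
  using act_wpow_b mul_b_multiple wpow_replicate by (metis d_word_def)

lemma act_wpow_cd:
  "valid_nf T m n nf \<Longrightarrow> act T m n (wpow (c_word m) i @ wpow (d_word n) j) nf = mul_cd T (i, j) nf"
  by (simp add: act_wpow_c act_wpow_d valid_mul_cd mul_cd_mul_cd)

lemma act_gen_words_cd:
  assumes "x \<in> gen_words {c_word m, d_word n}"
  obtains v where "\<And>nf. valid_nf T m n nf \<Longrightarrow> act T m n x nf = mul_cd T v nf"
proof -
  let ?acts = "\<lambda>x v. \<forall>nf. valid_nf T m n nf \<longrightarrow> act T m n x nf = mul_cd T v nf"
  have append: "?acts (u @ w) (fst a + fst b, snd a + snd b)" if "?acts u a" "?acts w b" for u w a b
    using that by (metis act_append valid_mul_cd mul_cd_mul_cd)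
  have power: "\<exists>a. ?acts (wpow s k) a" if "s \<in> {c_word m, d_word n}" for s k
    using that act_wpow_c act_wpow_d by blast
  have "\<exists>v. ?acts x v"
    using assms
  proof (induction rule: gen_words.induct)
    case nil
    show ?case using mul_cd_0 by (metis act_Nil)
  next
    case (gen s w)
    then show ?case using append power[of s 1] by (metis wpow_1)
  next
    case (geninv s w)
    then show ?case using append power[of s "-1"] by (metis wpow_minus_1)
  qed
  with that show ?thesis by blast
qed

lemma act_eqp_rels_Gt:
  "eqp (rels_Gt m n T) u v \<Longrightarrow> valid_nf T m n nf \<Longrightarrow> act T m n u nf = act T m n v nf"
proof (induction arbitrary: nf rule: eqp.induct)
  case (cancel u x v)
  then show ?case using act_winv[of T "act T m n v nf" "[flip x]"] valid_act by simp
next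
  case (rel r u v)
  have "act T m n r nf' = nf'" if "valid_nf T m n nf'" for nf'
  proof -
    have "commutator (c_word m) (d_word n) =
        (wpow (c_word m) (-1) @ wpow (d_word n) (-1)) @ (wpow (c_word m) 1 @ wpow (d_word n) 1)"
      by (simp add: commutator_def wpow_1 wpow_minus_1)
    then have "act T m n (commutator (c_word m) (d_word n)) nf' = mul_cd T (-1, -1) (mul_cd T (1, 1) nf')"
      using act_wpow_cd[OF that] act_wpow_cd[OF valid_mul_cd[OF that]] by (simp only: act_append)
    moreover have "act T m n (replicate (m * T) gen_a) nf' = mul_cd T (int T, 0) nf'"
      using act_wpow_c[OF that, of "int T"]
      by (simp add: wpow_def c_word_def concat_replicate_replicate mult.commute)
    moreover have "act T m n (replicate (n * T) gen_b) nf' = mul_cd T (0, int T) nf'"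
      using act_wpow_d[OF that, of "int T"]
      by (simp add: wpow_def d_word_def concat_replicate_replicate mult.commute)
    moreover have "mul_cd T (-1, -1) (mul_cd T (1, 1) nf') = nf'"
      using mul_cd_mul_cd[of T "(-1, -1)" "(1, 1)" nf'] mul_cd_0[OF that] by simp
    moreover have "mul_cd T (int T, 0) nf' = nf'" "mul_cd T (0, int T) nf' = nf'"
      using that by (cases nf' rule: nform_cases; simp add: red_def)+
    ultimately show ?thesis using rel(1) by (auto simp: rels_Gt_def)
  qed
  then show ?case using rel(2) valid_act by simp
qed auto

lemma mul_a_rmul_cd: "valid_nf T m n nf \<Longrightarrow> mul_a T m e (rmul_cd T nf v) = rmul_cd T (mul_a T m e nf) v"
proof (cases nf rule: nform_cases)
  case (Cons p q t r s ys)
  obtain ys' i j where "rmul_syls T ys v = (ys', (i, j))" by (rule rmul_syls_cases)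
  then show "valid_nf T m n nf \<Longrightarrow> ?thesis" using Cons by (cases t) (auto simp: ac_simps)
qed (cases v; auto simp: ac_simps)

lemma mul_b_rmul_cd: "valid_nf T m n nf \<Longrightarrow> mul_b T n e (rmul_cd T nf v) = rmul_cd T (mul_b T n e nf) v"
proof (cases nf rule: nform_cases)
  case (Cons p q t r s ys)
  obtain ys' i j where "rmul_syls T ys v = (ys', (i, j))" by (rule rmul_syls_cases)
  then show "valid_nf T m n nf \<Longrightarrow> ?thesis" using Cons by (cases t) (auto simp: ac_simps)
qed (cases v; auto simp: ac_simps)

lemma act_rmul_cd: "valid_nf T m n nf \<Longrightarrow> act T m n w (rmul_cd T nf v) = rmul_cd T (act T m n w nf) v"
  by (induction w) (simp_all add: act_letter_def mul_a_rmul_cd mul_b_rmul_cd valid_act)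

lemma act_conj:
  assumes x: "\<And>nf. valid_nf T m n nf \<Longrightarrow> act T m n x nf = mul_cd T v nf"
  shows "act T m n (winv x @ w @ x) ((0, 0), []) = conj_cd T (act T m n w ((0, 0), [])) v"
proof -
  let ?Y = "rmul_cd T (act T m n w ((0, 0), [])) v"
  have valid: "valid_nf T m n ((0, 0), [])" by simp
  have "act T m n x ((0, 0), []) = rmul_cd T ((0, 0), []) v"
    using x[OF valid] by (cases v) simp
  then have "act T m n (w @ x) ((0, 0), []) = ?Y"
    using act_rmul_cd[OF valid] by simp
  moreover have valid_Y: "valid_nf T m n ?Y"
    using valid_rmul_cd valid_act valid by blast
  then have "act T m n x (mul_cd T (- fst v, - snd v) ?Y) = ?Y"
    using x valid_mul_cd mul_cd_mul_cd mul_cd_0 by simp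
  ultimately show ?thesis
    using act_winv[of T "mul_cd T (- fst v, - snd v) ?Y" x] valid_mul_cd[OF valid_Y]
    by (simp add: conj_cd_def)
qed

lemma mul_a_red_nf:
  "\<bar>q\<bar> < int T \<Longrightarrow> mul_a T m e (red_nf T ((p, q), ys)) = red_nf T (mul_a 0 m e ((p, q), ys))"
  by (cases ys) (auto simp: ac_simps red_eq_0_iff)

lemma mul_b_red_nf:
  "\<bar>p\<bar> < int T \<Longrightarrow> mul_b T n e (red_nf T ((p, q), ys)) = red_nf T (mul_b 0 n e ((p, q), ys))"
  by (cases ys) (auto simp: ac_simps red_eq_0_iff)

text \<open>Reduction modulo \<open>T\<close> commutes with the action as long as the exponents of \<open>c\<close> and \<open>d\<close>
  stay below \<open>T\<close> along the computation: only then do the tests \<open>q \<noteq> 0\<close>, \<open>p \<noteq> 0\<close> in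
  \<^const>\<open>mul_a\<close> and \<^const>\<open>mul_b\<close> give the same answers.\<close>

lemma act_red_nf:
  "(\<And>k. head_bound (act 0 m n (drop k w) nf) < int T) \<Longrightarrow>
    act T m n w (red_nf T nf) = red_nf T (act 0 m n w nf)"
proof (induction w)
  case (Cons x w)
  have IH: "act T m n w (red_nf T nf) = red_nf T (act 0 m n w nf)"
    using Cons.IH Cons.prems[of "Suc _"] by simp
  obtain p q ys where nf': "act 0 m n w nf = ((p, q), ys)" by (metis prod.exhaust)
  have "\<bar>p\<bar> < int T" "\<bar>q\<bar> < int T" using Cons.prems[of 1] nf' by simp_all
  then show ?case using IH nf' mul_a_red_nf mul_b_red_nf by (simp add: act_letter_def)
qed simp

lemma act_suffixes_head_bounded: "\<exists>B. \<forall>k. head_bound (act 0 m n (drop k w) nf) \<le> B"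
proof (induction w)
  case (Cons x w)
  then obtain B where "\<forall>k. head_bound (act 0 m n (drop k w) nf) \<le> B" by blast
  then have "head_bound (act 0 m n (drop k (x # w)) nf) \<le> max B (head_bound (act 0 m n (x # w) nf))"
    for k by (cases k) (simp_all add: le_max_iff_disj)
  then show ?case by blast
qed (auto intro!: exI[of _ "head_bound nf"])

lemma act_red_nf_eventually:
  obtains B where "0 \<le> B" "nf_bound (act 0 m n w ((0, 0), [])) \<le> B"
    "\<And>T. B < int T \<Longrightarrow> act T m n w ((0, 0), []) = red_nf T (act 0 m n w ((0, 0), []))"
proof -
  let ?F = "act 0 m n w ((0, 0), [])"
  obtain B where B: "\<And>k. head_bound (act 0 m n (drop k w) ((0, 0), [])) \<le> B"
    using act_suffixes_head_bounded by blast
  have nonneg: "0 \<le> nf_bound ?F" by (cases ?F rule: nform_cases) auto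
  have red: "act T m n w ((0, 0), []) = red_nf T ?F" if "max B (nf_bound ?F) < int T" for T
  proof -
    have "head_bound (act 0 m n (drop k w) ((0, 0), [])) < int T" for k
      using B[of k] that by linarith
    then have "act T m n w (red_nf T ((0, 0), [])) = red_nf T ?F"
      by (rule act_red_nf)
    then show ?thesis by (simp add: red_syls_def)
  qed
  show ?thesis
  proof (rule that)
    show "0 \<le> max B (nf_bound ?F)" using nonneg by simp
    show "nf_bound ?F \<le> max B (nf_bound ?F)" by simp
  qed (rule red)
qed

end

section \<open>Normal forms represent elements of \<open>G\<^sub>m\<^sub>n\<close>\<close>

fun syl_word :: "nat \<Rightarrow> nat \<Rightarrow> syllable \<Rightarrow> word" where
  "syl_word m n (t, r, s) =
     (if t then wpow [gen_b] r @ wpow (c_word m) s else wpow [gen_a] r @ wpow (d_word n) s)"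

fun nf_word :: "nat \<Rightarrow> nat \<Rightarrow> nform \<Rightarrow> word" where
  "nf_word m n ((p, q), ys) = wpow (c_word m) p @ wpow (d_word n) q @ concat (map (syl_word m n) ys)"

context Gmn
begin

abbreviation eqG :: "word \<Rightarrow> word \<Rightarrow> bool" where
  "eqG \<equiv> eqp (rels_G m n)"

lemma eqG_c_d_commute: "eqG (c_word m @ d_word n) (d_word n @ c_word m)"
proof -
  let ?c = "c_word m" and ?d = "d_word n"
  have "eqG ((?d @ ?c) @ commutator ?c ?d @ []) ((?d @ ?c) @ [])"
    by (rule eqp.rel) (simp add: rels_G_def)
  then have "eqG (?d @ ?c @ winv ?c @ winv ?d @ ?c @ ?d) (?d @ ?c)"
    by (simp add: commutator_def)
  moreover have "eqG (?d @ ?c @ winv ?c @ winv ?d @ ?c @ ?d) (?c @ ?d)"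
    using eqp_append_left[OF eqp_cancel_winv[of "rels_G m n" ?c "winv ?d @ ?c @ ?d"], of ?d]
      eqp_cancel_winv[of "rels_G m n" ?d "?c @ ?d"] eqp.trans by blast
  ultimately show ?thesis using eqp.sym eqp.trans by blast
qed

lemma eqG_a_c_commute: "eqG ([gen_a] @ c_word m) (c_word m @ [gen_a])"
  by (simp add: c_word_def replicate_append_same eqp.refl)

lemma eqG_b_d_commute: "eqG ([gen_b] @ d_word n) (d_word n @ [gen_b])"
  by (simp add: d_word_def replicate_append_same eqp.refl)

lemma eqG_wpow_a_c:
  "eqG (wpow [gen_a] e @ wpow (c_word m) p @ w)
       (wpow (c_word m) (p + e div int m) @ wpow [gen_a] (e mod int m) @ w)"
proof -
  have "e = e mod int m + int m * (e div int m)" by simp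
  then have "eqG (wpow [gen_a] e @ wpow (c_word m) p @ w)
      (wpow [gen_a] (e mod int m) @ wpow [gen_a] (int m * (e div int m)) @ wpow (c_word m) p @ w)"
    using eqp.sym[OF eqp_wpow_add] by metis
  also have "eqG \<dots> (wpow [gen_a] (e mod int m) @ wpow (c_word m) (e div int m + p) @ w)"
    unfolding wpow_replicate c_word_def[symmetric] by (rule eqp_append_left[OF eqp_wpow_add])
  also have "eqG \<dots> (wpow (c_word m) (e div int m + p) @ wpow [gen_a] (e mod int m) @ w)"
    by (rule eqp_commute_wpow[OF eqG_a_c_commute])
  finally show ?thesis by (simp add: add.commute)
qed

lemma eqG_wpow_b_d:
  "eqG (wpow [gen_b] e @ wpow (d_word n) q @ w)
       (wpow (d_word n) (q + e div int n) @ wpow [gen_b] (e mod int n) @ w)"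
proof -
  have "e = e mod int n + int n * (e div int n)" by simp
  then have "eqG (wpow [gen_b] e @ wpow (d_word n) q @ w)
      (wpow [gen_b] (e mod int n) @ wpow [gen_b] (int n * (e div int n)) @ wpow (d_word n) q @ w)"
    using eqp.sym[OF eqp_wpow_add] by metis
  also have "eqG \<dots> (wpow [gen_b] (e mod int n) @ wpow (d_word n) (e div int n + q) @ w)"
    unfolding wpow_replicate d_word_def[symmetric] by (rule eqp_append_left[OF eqp_wpow_add])
  also have "eqG \<dots> (wpow (d_word n) (e div int n + q) @ wpow [gen_b] (e mod int n) @ w)"
    by (rule eqp_commute_wpow[OF eqG_b_d_commute])
  finally show ?thesis by (simp add: add.commute)
qed

lemma nf_word_mul_a: "eqG (wpow [gen_a] e @ nf_word m n nf) (nf_word m n (mul_a 0 m e nf))"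
proof -
  let ?W = "\<lambda>ys. concat (map (syl_word m n) ys)"
  have absorb: "eqG (wpow [gen_a] e @ wpow (c_word m) p @ wpow (d_word n) s @ ?W ys)
      (nf_word m n (if e mod int m = 0 then ((p + e div int m, s), ys)
                    else ((p + e div int m, 0), (False, e mod int m, s) # ys)))" for e p s ys
    using eqG_wpow_a_c[of e p "wpow (d_word n) s @ ?W ys"] by (cases "e mod int m = 0") simp_all
  show ?thesis
  proof (cases nf rule: nform_cases)
    case (Nil p q)
    then show ?thesis using absorb[of e p q "[]"] by (cases "e mod int m = 0") simp_all
  next
    case (Cons p q t r s ys)
    show ?thesis
    proof (cases "q \<noteq> 0 \<or> t")
      case True
      then show ?thesis
        using Cons absorb[of e p q "(t, r, s) # ys"] by (cases t; cases "e mod int m = 0") simp_all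
    next
      case False
      have "eqG (wpow [gen_a] e @ wpow (c_word m) p @ wpow [gen_a] r @ wpow (d_word n) s @ ?W ys)
          (wpow [gen_a] e @ wpow [gen_a] r @ wpow (c_word m) p @ wpow (d_word n) s @ ?W ys)"
        by (rule eqp_append_left[OF eqp_commute_wpow[OF eqp.sym[OF eqG_a_c_commute]]])
      also have "eqG \<dots> (wpow [gen_a] (e + r) @ wpow (c_word m) p @ wpow (d_word n) s @ ?W ys)"
        by (rule eqp_wpow_add)
      also have "eqG \<dots> (nf_word m n (mul_a 0 m e nf))"
        using absorb[of "e + r" p s ys] False Cons by (cases "(e + r) mod int m = 0") simp_all
      finally show ?thesis using False Cons by simp
    qed
  qed
qed

lemma nf_word_mul_b: "eqG (wpow [gen_b] e @ nf_word m n nf) (nf_word m n (mul_b 0 n e nf))"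
proof -
  let ?W = "\<lambda>ys. concat (map (syl_word m n) ys)"
  have absorb: "eqG (wpow [gen_b] e @ wpow (d_word n) q @ wpow (c_word m) s @ ?W ys)
      (nf_word m n (if e mod int n = 0 then ((s, q + e div int n), ys)
                    else ((0, q + e div int n), (True, e mod int n, s) # ys)))" for e q s ys
  proof (cases "e mod int n = 0")
    case True
    have "eqG (wpow [gen_b] e @ wpow (d_word n) q @ wpow (c_word m) s @ ?W ys)
        (wpow (d_word n) (q + e div int n) @ wpow (c_word m) s @ ?W ys)"
      using eqG_wpow_b_d[of e q "wpow (c_word m) s @ ?W ys"] True by simp
    also have "eqG \<dots> (wpow (c_word m) s @ wpow (d_word n) (q + e div int n) @ ?W ys)"
      by (rule eqp_commute_wpow[OF eqp.sym[OF eqG_c_d_commute]])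
    finally show ?thesis using True by simp
  next
    case False
    then show ?thesis using eqG_wpow_b_d[of e q "wpow (c_word m) s @ ?W ys"] by simp
  qed
  have commute: "eqG (wpow [gen_b] e @ nf_word m n ((p, q), ys))
      (wpow [gen_b] e @ wpow (d_word n) q @ wpow (c_word m) p @ ?W ys)" for p q ys
    using eqp_append_left[OF eqp_commute_wpow[OF eqG_c_d_commute]] by simp
  show ?thesis
  proof (cases nf rule: nform_cases)
    case (Nil p q)
    then show ?thesis
      using eqp.trans[OF commute absorb[of e q p "[]"]] by (cases "e mod int n = 0") simp_all
  next
    case (Cons p q t r s ys)
    show ?thesis
    proof (cases "p \<noteq> 0 \<or> \<not> t")
      case True
      then show ?thesis
        using Cons eqp.trans[OF commute absorb[of e q p "(t, r, s) # ys"]]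
        by (cases t; cases "e mod int n = 0") simp_all
    next
      case False
      have "eqG (wpow [gen_b] e @ nf_word m n nf)
          (wpow [gen_b] e @ wpow (d_word n) q @ wpow [gen_b] r @ wpow (c_word m) s @ ?W ys)"
        using commute[of p q "(t, r, s) # ys"] False Cons by simp
      also have "eqG \<dots> (wpow [gen_b] e @ wpow [gen_b] r @ wpow (d_word n) q @ wpow (c_word m) s @ ?W ys)"
        by (rule eqp_append_left[OF eqp_commute_wpow[OF eqp.sym[OF eqG_b_d_commute]]])
      also have "eqG \<dots> (wpow [gen_b] (e + r) @ wpow (d_word n) q @ wpow (c_word m) s @ ?W ys)"
        by (rule eqp_wpow_add)
      also have "eqG \<dots> (nf_word m n (mul_b 0 n e nf))"
        using absorb[of "e + r" q s ys] False Cons by (cases "(e + r) mod int n = 0") simp_all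
      finally show ?thesis .
    qed
  qed
qed

lemma nf_word_act: "eqG w (nf_word m n (act 0 m n w ((0, 0), [])))"
proof (induction w)
  case Nil
  show ?case by (simp add: eqp.refl)
next
  case (Cons x w)
  let ?nf = "act 0 m n w ((0, 0), [])"
  have "eqG (x # nf_word m n ?nf) (nf_word m n (act_letter 0 m n x ?nf))"
    using nf_word_mul_a[of 1 ?nf] nf_word_mul_a[of "-1" ?nf]
      nf_word_mul_b[of 1 ?nf] nf_word_mul_b[of "-1" ?nf]
    by (cases x) (auto simp: act_letter_def wpow_def gen_a_def gen_b_def flip_def)
  then show ?case using eqp_append_left[OF Cons.IH, of "[x]"] eqp.trans by fastforce
qed

lemma nf_word_gen_words:
  assumes "\<forall>y\<in>set ys. fst y = t"
  shows "nf_word m n ((p, q), ys) \<in> gen_words {[(t, False)], c_word m, d_word n}"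
proof -
  have "concat (map (syl_word m n) ys) \<in> gen_words {[(t, False)], c_word m, d_word n}"
    using assms
    by (induction ys)
      (auto simp: gen_a_def gen_b_def intro: gen_words.nil intro!: gen_words_append gen_words_wpow)
  then show ?thesis by (auto intro: gen_words_append gen_words_wpow)
qed

lemma elength_le_1: "inA m n f \<or> inB m n f \<Longrightarrow> elength m n f \<le> 1"
  unfolding elength_def
  by (rule Least_le, rule exI[of _ "[f]"]) (auto simp: reduced_form_def eqp.refl)

lemma mixed_syls_if_elength_gt_1:
  assumes "1 < elength m n g"
  shows "mixed_syls (snd (act 0 m n g ((0, 0), [])))"
proof (rule ccontr)
  obtain p q ys where nf: "act 0 m n g ((0, 0), []) = ((p, q), ys)" by (metis prod.exhaust)
  assume "\<not> ?thesis"
  then obtain t where "\<forall>y\<in>set ys. fst y = t" using nf by (auto simp: mixed_syls_def)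
  then have "nf_word m n ((p, q), ys) \<in> gen_words {[(t, False)], c_word m, d_word n}"
    by (rule nf_word_gen_words)
  moreover have "eqG g (nf_word m n ((p, q), ys))" using nf_word_act[of g] nf by simp
  ultimately have "inA m n g \<or> inB m n g"
    by (cases t) (auto simp: inA_def inB_def in_sub_def gen_a_def gen_b_def)
  then show False using elength_le_1 assms by fastforce
qed

lemma sub_conj_G_if_act_eq:
  assumes "act 0 m n f ((0, 0), []) = act 0 m n (winv x @ g @ x) ((0, 0), [])" and "x \<in> gen_words S"
  shows "sub_conj (rels_G m n) S f g"
proof -
  have "eqG f (winv x @ g @ x)"
    using nf_word_act[of f] nf_word_act[of "winv x @ g @ x"] assms(1) eqp.sym eqp.trans by metis
  with assms(2) show ?thesis by (auto simp: sub_conj_def)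
qed

lemma sub_conj_G_if_sub_conj_Gt:
  assumes F: "act 0 m n f ((0, 0), []) = ((pF, qF), ysF)"
    and G: "act 0 m n g ((0, 0), []) = ((pG, qG), ysG)" and mixed: "mixed_syls ysG"
    and bounds: "nf_bound ((pF, qF), ysF) \<le> B" "nf_bound ((pG, qG), ysG) \<le> B" and T: "6 * B < int T"
    and red_F: "act T m n f ((0, 0), []) = red_nf T ((pF, qF), ysF)"
    and red_G: "act T m n g ((0, 0), []) = red_nf T ((pG, qG), ysG)"
    and conj_Gt: "sub_conj (rels_Gt m n T) {c_word m, d_word n} f g"
  shows "sub_conj (rels_G m n) {c_word m, d_word n} f g"
proof -
  define x0 where "x0 = wpow (c_word m) (pG - pF) @ wpow (d_word n) (qG - qF)"
  obtain x where x: "x \<in> gen_words {c_word m, d_word n}"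
    and conj: "eqp (rels_Gt m n T) f (winv x @ g @ x)"
    using conj_Gt unfolding sub_conj_def by blast
  obtain i j where "\<And>nf. valid_nf T m n nf \<Longrightarrow> act T m n x nf = mul_cd T (i, j) nf"
    using act_gen_words_cd[OF x] by (metis prod.exhaust)
  then have "red_nf T ((pF, qF), ysF) = conj_cd T (red_nf T ((pG, qG), ysG)) (i, j)"
    using act_eqp_rels_Gt[OF conj, of "((0, 0), [])"] act_conj[of T x "(i, j)" g] red_F red_G by simp
  then have "act 0 m n f ((0, 0), []) = conj_cd 0 (act 0 m n g ((0, 0), [])) (pG - pF, qG - qF)"
    using conj_cd_lift[OF mixed bounds T] F G by simp
  also have "\<dots> = act 0 m n (winv x0 @ g @ x0) ((0, 0), [])"
    unfolding x0_def by (rule act_conj[OF act_wpow_cd, symmetric])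
  finally have "act 0 m n f ((0, 0), []) = act 0 m n (winv x0 @ g @ x0) ((0, 0), [])" .
  moreover have "x0 \<in> gen_words {c_word m, d_word n}"
    unfolding x0_def by (intro gen_words_append gen_words_wpow) auto
  ultimately show ?thesis by (rule sub_conj_G_if_act_eq)
qed

lemma not_sub_conj_Gt_if_mixed:
  assumes mixed: "mixed_syls (snd (act 0 m n g ((0, 0), [])))"
    and not_conj: "\<not> sub_conj (rels_G m n) {c_word m, d_word n} f g"
  shows "\<exists>t>1. \<not> sub_conj (rels_Gt m n t) {c_word m, d_word n} f g"
proof -
  obtain pF qF ysF where F: "act 0 m n f ((0, 0), []) = ((pF, qF), ysF)" by (metis prod.exhaust)
  obtain pG qG ysG where G: "act 0 m n g ((0, 0), []) = ((pG, qG), ysG)" by (metis prod.exhaust)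
  obtain Bf where Bf: "0 \<le> Bf" "nf_bound ((pF, qF), ysF) \<le> Bf"
    "\<And>T. Bf < int T \<Longrightarrow> act T m n f ((0, 0), []) = red_nf T ((pF, qF), ysF)"
    using act_red_nf_eventually[of f] F by metis
  obtain Bg where Bg: "0 \<le> Bg" "nf_bound ((pG, qG), ysG) \<le> Bg"
    "\<And>T. Bg < int T \<Longrightarrow> act T m n g ((0, 0), []) = red_nf T ((pG, qG), ysG)"
    using act_red_nf_eventually[of g] G by metis
  define B where "B = max Bf Bg"
  define T where "T = nat (6 * B + 2)"
  have T: "6 * B < int T" "Bf < int T" "Bg < int T" "1 < T"
    using Bf(1) Bg(1) by (auto simp: T_def B_def)
  have bounds: "nf_bound ((pF, qF), ysF) \<le> B" "nf_bound ((pG, qG), ysG) \<le> B"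
    using Bf(2) Bg(2) by (simp_all add: B_def le_max_iff_disj del: nf_bound.simps)
  have "\<not> sub_conj (rels_Gt m n T) {c_word m, d_word n} f g"
  proof
    assume "sub_conj (rels_Gt m n T) {c_word m, d_word n} f g"
    moreover have "mixed_syls ysG" using mixed G by simp
    ultimately have "sub_conj (rels_G m n) {c_word m, d_word n} f g"
      using sub_conj_G_if_sub_conj_Gt[OF F G _ bounds T(1) Bf(3)[OF T(2)] Bg(3)[OF T(3)]] by blast
    with not_conj show False ..
  qed
  with T(4) show ?thesis by blast
qed

end

theorem proposition3p1:
  fixes m n :: nat and f g :: word
  assumes "m > 1" and "n > 1"
    and "elength m n f = elength m n g" and "elength m n g > 1"
    and "\<not> sub_conj (rels_G m n) {c_word m, d_word n} f g"
  shows "\<exists>t::nat. t > 1 \<and>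
           \<not> sub_conj (rels_Gt m n t) {c_word m, d_word n} f g"
proof -
  interpret Gmn m n using assms(1,2) by unfold_locales simp_all
  show ?thesis
    using not_sub_conj_Gt_if_mixed[OF mixed_syls_if_elength_gt_1[OF assms(4)] assms(5)] .
qed

end
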